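(* Assume the semi-classical setting described in the context, with polynomials $W\not\equiv 0$, $V$, $U$ such that $W f' = 2Vf + U$. For $n\ge 1$ define the formal Laurent series (in powers of $z$, finitely many positive powers) $$\Theta_n = W\,(\varepsilon_n p_n' - \varepsilon_n' p_n) + 2V\varepsilon_n p_n,\qquad \Omega_n = a_n W\,(\varepsilon_{n-1}p_n' - \varepsilon_n' p_{n-1}) + a_n V\,(\varepsilon_{n-1}p_n + \varepsilon_n p_{n-1}).$$ Then $\Theta_n$ and $\Omega_n$ are polynomials in $z$ (all coefficients of negative powers of $z$ vanish), $\deg\Theta_n\le \max(\deg W-2,\deg V-1)$, and $\deg \Omega_n\le\max(\deg W-1,\deg V)$. Moreover, $\Theta_n = W\,[p_{n-1}^{(1)\prime}p_n - p_n' p_{n-1}^{(1)}] - 2V p_{n-1}^{(1)}p_n - U p_n^2$. If in addition $W(z)=\prod_{k=1}^m (z-x_k)$ with $m\ge 2$ and $2V(z) = W(z)\sum_{k=1}^m \alpha_k/(z-x_k)$, then $$\Theta_n(z) = \Big(2n+1+\sum_{k=1}^m\alpha_k\Big)z^{m-2} + (\text{lower powers}),\qquad \Omega_n(z) = \Big(n+\tfrac12\sum_{k=1}^m\alpha_k\Big)z^{m-1} + (\text{lower powers}).$$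
   Context: Let $(\mu_k)_{k\ge 0}$ be complex numbers such that all Hankel determinants $\det(\mu_{i+j})_{0\le i,j\le n}$, $n\ge 0$, are nonzero. Let $\mathcal L$ be the linear functional on polynomials with $\mathcal L(x^k)=\mu_k$, and let $p_n(z)=\gamma_n z^n+\cdots$ ($\gamma_n\neq 0$) be the orthonormal polynomials: $\mathcal L(p_np_m)=\delta_{n,m}$. They satisfy $a_{n+1}p_{n+1}(z)=(z-b_n)p_n(z)-a_np_{n-1}(z)$ ($n\ge0$, $p_{-1}=0$) with $a_n=\gamma_{n-1}/\gamma_n$. Let $f(z)=\sum_{k\ge0}\mu_k z^{-k-1}$ (formal series in $1/z$). For $n\ge0$ let $p^{(1)}_{n-1}$ be the polynomial part of $f p_n$ and $\varepsilon_n = f p_n - p^{(1)}_{n-1}$, a formal series of the form $\gamma_n^{-1}z^{-n-1}+O(z^{-n-2})$. Primes denote $d/dz$. The setting is semi-classical if there are polynomials $W\not\equiv0$, $V$, $U$ with $Wf'=2Vf+U$ (as formal series). *)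

theory Defs
  imports "HOL-Computational_Algebra.Polynomial" "HOL-Computational_Algebra.Formal_Laurent_Series"
          "Jordan_Normal_Form.Determinant"
begin

text \<open>Formal Laurent series in powers of z with finitely many positive powers are represented
  as formal Laurent series (type fls) in the variable X = 1/z: the coefficient of z^k is the
  fls coefficient at index -k.\<close>

definition zpoly :: "complex poly \<Rightarrow> complex fls" where
  "zpoly p = (\<Sum>k\<le>degree p. fls_const (coeff p k) * fls_X_intpow (- int k))"

text \<open>Derivative d/dz; since X = 1/z this is -X^2 d/dX.\<close>
definition zderiv :: "complex fls \<Rightarrow> complex fls" where
  "zderiv G = - (fls_X ^ 2 * fls_deriv G)"

definition zpolypart :: "complex fls \<Rightarrow> complex poly" where
  "zpolypart G = (\<Sum>k\<le>nat (- fls_subdegree G). monom (fls_nth G (- int k)) k)"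

text \<open>The moment series f(z) = sum_k mu_k z^(-k-1).\<close>
definition moment_series :: "(nat \<Rightarrow> complex) \<Rightarrow> complex fls" where
  "moment_series \<mu> = fls_shift (-1) (fps_to_fls (Abs_fps \<mu>))"

definition momL :: "(nat \<Rightarrow> complex) \<Rightarrow> complex poly \<Rightarrow> complex" where
  "momL \<mu> q = (\<Sum>k\<le>degree q. coeff q k * \<mu> k)"

definition hankel :: "(nat \<Rightarrow> complex) \<Rightarrow> nat \<Rightarrow> complex mat" where
  "hankel \<mu> n = mat (n+1) (n+1) (\<lambda>(i,j). \<mu> (i+j))"

text \<open>Second-kind series eps_n = f p_n - p^(1)_(n-1).\<close>
definition epsn :: "(nat \<Rightarrow> complex) \<Rightarrow> complex poly \<Rightarrow> complex fls" where
  "epsn \<mu> q = moment_series \<mu> * zpoly q - zpoly (zpolypart (moment_series \<mu> * zpoly q))"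

text \<open>Degree with the convention that the zero polynomial has degree -1 (only used in
  bounds where -1 acts exactly like -infinity).\<close>
definition deg' :: "complex poly \<Rightarrow> int" where
  "deg' q = (if q = 0 then -1 else int (degree q))"

definition poly_deg_le :: "complex fls \<Rightarrow> int \<Rightarrow> bool" where
  "poly_deg_le G b \<longleftrightarrow> (\<forall>j>0. fls_nth G j = 0) \<and> (\<forall>k::nat. int k > b \<longrightarrow> fls_nth G (- int k) = 0)"

end

theory Submission
  imports Defs
begin

text \<open>Write \<gamma>_k for the leading coefficient of p_k. Substituting \<epsilon>_k = f p_k - p^(1)_(k-1)
  into \<Theta>_n and \<Omega>_n, the Pearson equation W f' = 2Vf + U cancels every term containing f, so
  both are polynomials in z. On the other hand orthogonality gives
  \<epsilon>_k = \<gamma>_k^-1 z^(-k-1) + O(z^(-k-2)), hence \<epsilon>_n p_n' - \<epsilon>_n' p_n = (2n+1) z^-2 + \<dots>,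
  \<epsilon>_n p_n = z^-1 + \<dots>, a_n (\<epsilon>_(n-1) p_n' - \<epsilon>_n' p_(n-1)) = n z^-1 + \<dots> and
  a_n (\<epsilon>_(n-1) p_n + \<epsilon>_n p_(n-1)) = 1 + \<dots>. Multiplying by W and V bounds the degrees of the
  two polynomials and, when W is monic of degree m with 2V/W = \<Sum> \<alpha>_k/(z - x_k), determines
  their top coefficients.\<close>

section \<open>Polynomials in z as Laurent series in 1/z\<close>

lemma fls_nth_zpoly: "fls_nth (zpoly q) j = (if j \<le> 0 then coeff q (nat (- j)) else 0)"
proof -
  have "fls_nth (zpoly q) j = (\<Sum>k\<le>degree q. if k = nat (- j) \<and> j \<le> 0 then coeff q k else 0)"
    unfolding zpoly_def fls_nth_sum by (intro sum.cong) auto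
  then show ?thesis
    by (auto simp: sum.delta coeff_eq_0 not_le)
qed

lemma fls_nth_zpoly_nat [simp]: "fls_nth (zpoly q) (- int k) = coeff q k"
  by (simp add: fls_nth_zpoly)

lemma zpoly_0 [simp]: "zpoly 0 = 0"
  by (rule fls_eqI) (simp add: fls_nth_zpoly)

lemma zpoly_add [simp]: "zpoly (p + q) = zpoly p + zpoly q"
  by (rule fls_eqI) (simp add: fls_nth_zpoly)

lemma zpoly_diff [simp]: "zpoly (p - q) = zpoly p - zpoly q"
  by (rule fls_eqI) (simp add: fls_nth_zpoly)

lemma zpoly_smult [simp]: "zpoly (Polynomial.smult c p) = fls_const c * zpoly p"
  by (rule fls_eqI) (simp add: fls_nth_zpoly)

lemma zpoly_pCons: "zpoly (pCons a q) = fls_const a + fls_X_inv * zpoly q"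
  by (rule fls_eqI)
    (auto simp: fls_nth_zpoly fls_X_inv_times_conv_shift coeff_pCons nat_eq_iff split: nat.split)

lemma zpoly_mult [simp]: "zpoly (p * q) = zpoly p * zpoly q"
proof (induction p rule: pCons_induct)
  case (pCons a p)
  have "zpoly (pCons a p * q) = zpoly (Polynomial.smult a q + pCons 0 (p * q))"
    by simp
  also have "\<dots> = zpoly (pCons a p) * zpoly q"
    by (simp add: zpoly_pCons pCons.IH algebra_simps)
  finally show ?case .
qed simp

lemma zpoly_const [simp]: "zpoly [:c:] = fls_const c"
  by (rule fls_eqI) (auto simp: fls_nth_zpoly coeff_pCons split: nat.split)

lemma zpoly_numeral [simp]: "zpoly (numeral w) = numeral w"
  by (simp add: numeral_poly)

lemma zpoly_power [simp]: "zpoly (q ^ k) = zpoly q ^ k"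
  by (induction k) (auto simp: one_pCons zpoly_pCons)

lemma fls_nth_zderiv: "fls_nth (zderiv G) j = - (of_int (j - 1) * fls_nth G (j - 1))"
  unfolding zderiv_def by (simp add: fls_X_power_times_conv_shift)

lemma zderiv_zpoly: "zderiv (zpoly q) = zpoly (pderiv q)"
proof (rule fls_eqI)
  fix j
  show "fls_nth (zderiv (zpoly q)) j = fls_nth (zpoly (pderiv q)) j"
  proof (cases "j \<le> 0")
    case True
    then have "nat (- (j - 1)) = Suc (nat (- j))" by auto
    with True show ?thesis
      by (simp add: fls_nth_zderiv fls_nth_zpoly coeff_pderiv of_nat_nat algebra_simps)
  qed (simp add: fls_nth_zderiv fls_nth_zpoly)
qed

lemma zderiv_diff [simp]: "zderiv (F - G) = zderiv F - zderiv G"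
  by (simp add: zderiv_def algebra_simps)

lemma zderiv_mult [simp]: "zderiv (F * G) = zderiv F * G + F * zderiv G"
  by (simp add: zderiv_def algebra_simps)

section \<open>Order at infinity\<close>

text \<open>Read in z = 1/X, vanishes_below G d says G = O(z^-d) at infinity.\<close>

definition vanishes_below :: "'a::zero fls \<Rightarrow> int \<Rightarrow> bool" where
  "vanishes_below G d \<longleftrightarrow> (\<forall>j<d. fls_nth G j = 0)"

lemma vanishes_belowD: "vanishes_below G d \<Longrightarrow> j < d \<Longrightarrow> fls_nth G j = 0"
  by (simp add: vanishes_below_def)

lemma vanishes_below_mono: "vanishes_below G d \<Longrightarrow> e \<le> d \<Longrightarrow> vanishes_below G e"
  by (simp add: vanishes_below_def)

lemma vanishes_below_add:
  "vanishes_below F d \<Longrightarrow> vanishes_below G d \<Longrightarrow> vanishes_below (F + G) d"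
  by (simp add: vanishes_below_def)

lemma vanishes_below_diff:
  "vanishes_below F d \<Longrightarrow> vanishes_below G d \<Longrightarrow> vanishes_below (F - G) d"
  by (simp add: vanishes_below_def)

lemma vanishes_below_const: "vanishes_below (fls_const c) 0"
  by (simp add: vanishes_below_def)

lemma vanishes_below_subdegree:
  "vanishes_below F d \<Longrightarrow> F \<noteq> 0 \<Longrightarrow> d \<le> fls_subdegree F"
  by (auto simp: vanishes_below_def intro: fls_subdegree_geI)

lemma vanishes_below_mult:
  fixes F G :: "'a::semiring_0 fls"
  assumes "vanishes_below F a" "vanishes_below G b" "a + b = c"
  shows "vanishes_below (F * G) c"
proof (cases "F = 0 \<or> G = 0")
  case False
  then have "a \<le> fls_subdegree F" "b \<le> fls_subdegree G"
    using assms vanishes_below_subdegree by auto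
  then show ?thesis
    by (auto simp: vanishes_below_def assms(3)[symmetric] intro!: fls_times_nth_eq0)
qed (auto simp: vanishes_below_def)

lemma fls_nth_mult_vanishes_below:
  fixes F G :: "'a::semiring_0 fls"
  assumes F: "vanishes_below F a" and G: "vanishes_below G b" and c: "a + b = c"
  shows "fls_nth (F * G) c = fls_nth F a * fls_nth G b"
proof (cases "F = 0 \<or> G = 0")
  case False
  then have a: "a \<le> fls_subdegree F" and b: "b \<le> fls_subdegree G"
    using F G vanishes_below_subdegree by auto
  show ?thesis
  proof (cases "a = fls_subdegree F \<and> b = fls_subdegree G")
    case False
    then have "a < fls_subdegree F \<or> b < fls_subdegree G" using a b by auto
    with a b show ?thesis by (auto simp: c[symmetric] fls_times_nth_eq0)
  qed (simp add: c[symmetric])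
qed auto

lemma vanishes_below_mult_add:
  fixes F\<^sub>1 G\<^sub>1 F\<^sub>2 G\<^sub>2 :: "'a::semiring_0 fls"
  assumes "vanishes_below F\<^sub>1 a\<^sub>1" "vanishes_below G\<^sub>1 b\<^sub>1" "vanishes_below F\<^sub>2 a\<^sub>2" "vanishes_below G\<^sub>2 b\<^sub>2"
    and "a\<^sub>1 + b\<^sub>1 = c" "a\<^sub>2 + b\<^sub>2 = c"
  shows "vanishes_below (F\<^sub>1 * G\<^sub>1 + F\<^sub>2 * G\<^sub>2) c"
    and "fls_nth (F\<^sub>1 * G\<^sub>1 + F\<^sub>2 * G\<^sub>2) c
           = fls_nth F\<^sub>1 a\<^sub>1 * fls_nth G\<^sub>1 b\<^sub>1 + fls_nth F\<^sub>2 a\<^sub>2 * fls_nth G\<^sub>2 b\<^sub>2"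
  using vanishes_below_mult[OF assms(1,2,5)] vanishes_below_mult[OF assms(3,4,6)]
    fls_nth_mult_vanishes_below[OF assms(1,2,5)] fls_nth_mult_vanishes_below[OF assms(3,4,6)]
  by (auto intro: vanishes_below_add)

lemma vanishes_below_zderiv: "vanishes_below G d \<Longrightarrow> vanishes_below (zderiv G) (d + 1)"
  by (simp add: vanishes_below_def fls_nth_zderiv)

lemma vanishes_below_zpoly: "deg' q \<le> b \<Longrightarrow> vanishes_below (zpoly q) (- b)"
  by (auto simp: vanishes_below_def fls_nth_zpoly deg'_def coeff_eq_0 split: if_splits)

lemma deg'_smult: "c \<noteq> 0 \<Longrightarrow> deg' (Polynomial.smult c q) = deg' q"
  by (simp add: deg'_def)

lemma poly_deg_le_zpolyI: "vanishes_below (zpoly R) (- b) \<Longrightarrow> poly_deg_le (zpoly R) b"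
  by (auto simp: poly_deg_le_def fls_nth_zpoly) (metis fls_nth_zpoly_nat neg_less_iff_less vanishes_belowD)

lemma poly_deg_le_zpoly_combination:
  assumes "G = zpoly R" "G = zpoly W * A + zpoly S * B"
    and "vanishes_below A (d + 1)" "vanishes_below B d"
  shows "poly_deg_le G (max (deg' W - d - 1) (deg' S - d))"
proof -
  have "vanishes_below (zpoly W * A) (- max (deg' W - d - 1) (deg' S - d))"
    "vanishes_below (zpoly S * B) (- max (deg' W - d - 1) (deg' S - d))"
    by (rule vanishes_below_mono, rule vanishes_below_mult[OF vanishes_below_zpoly _ refl],
        use assms in auto)+
  then have "vanishes_below (zpoly R) (- max (deg' W - d - 1) (deg' S - d))"
    using assms(1,2) by (metis vanishes_below_add)
  then show ?thesis
    using assms(1) by (simp add: poly_deg_le_zpolyI)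
qed

lemma zpoly_combination_leading_coeff:
  fixes m :: nat
  assumes "degree W \<le> m" "degree S < m"
    and "vanishes_below A (d + 1)" "vanishes_below B d"
  defines "G \<equiv> zpoly W * A + zpoly S * B"
  shows "fls_nth G (d + 1 - m) = coeff W m * fls_nth A (d + 1) + coeff S (m - 1) * fls_nth B d"
    and "\<forall>k::nat. int k > int m - d - 1 \<longrightarrow> fls_nth G (- int k) = 0"
proof -
  have "deg' W \<le> int m" "deg' S \<le> int (m - 1)"
    using assms(1,2) by (auto simp: deg'_def)
  then have W: "vanishes_below (zpoly W) (- int m)" and S: "vanishes_below (zpoly S) (- int (m - 1))"
    by (auto intro: vanishes_below_zpoly)
  have "- int m + (d + 1) = d + 1 - m" "- int (m - 1) + d = d + 1 - m"
    using assms(2) by linarith+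
  note leading = vanishes_below_mult_add[OF W assms(3) S assms(4) this, folded G_def]
  from leading(2) show "fls_nth G (d + 1 - m) = coeff W m * fls_nth A (d + 1) + coeff S (m - 1) * fls_nth B d"
    by simp
  from leading(1) show "\<forall>k::nat. int k > int m - d - 1 \<longrightarrow> fls_nth G (- int k) = 0"
    by (auto elim!: vanishes_belowD)
qed

section \<open>The moment functional\<close>

lemma momL_eq_sum: "degree q \<le> N \<Longrightarrow> momL \<mu> q = (\<Sum>k\<le>N. coeff q k * \<mu> k)"
  unfolding momL_def by (intro sum.mono_neutral_left) (auto simp: coeff_eq_0)

lemma momL_0 [simp]: "momL \<mu> 0 = 0"
  by (simp add: momL_def)

lemma momL_add: "momL \<mu> (p + q) = momL \<mu> p + momL \<mu> q"
proof -
  have "degree (p + q) \<le> max (degree p) (degree q)"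
    by (rule degree_add_le) auto
  then show ?thesis
    by (simp add: momL_eq_sum[of _ "max (degree p) (degree q)"] sum.distrib algebra_simps)
qed

lemma momL_smult: "momL \<mu> (Polynomial.smult c p) = c * momL \<mu> p"
  using momL_eq_sum[of "Polynomial.smult c p" "degree p"]
  by (simp add: momL_def sum_distrib_left algebra_simps)

lemma momL_monom: "momL \<mu> (monom c i) = c * \<mu> i"
  using momL_eq_sum[of "monom c i" i \<mu>]
  by (simp add: coeff_monom degree_monom_le if_distrib[of "\<lambda>x. x * _"] cong: if_cong)

lemma fls_nth_moment_series_mult:
  "fls_nth (moment_series \<mu> * zpoly q) (int i + 1) = momL \<mu> (monom 1 i * q)"
proof (induction q arbitrary: i rule: pCons_induct)
  case (pCons a q)
  have monom_pCons: "monom 1 i * pCons a q = monom a i + monom 1 (Suc i) * q"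
    by (rule poly_eqI) (auto simp: coeff_monom_mult coeff_pCons coeff_monom split: nat.split)
  have "moment_series \<mu> * zpoly (pCons a q)
      = fls_const a * moment_series \<mu> + fls_X_inv * (moment_series \<mu> * zpoly q)"
    by (simp add: zpoly_pCons algebra_simps)
  then have "fls_nth (moment_series \<mu> * zpoly (pCons a q)) (int i + 1)
      = a * \<mu> i + fls_nth (moment_series \<mu> * zpoly q) (int (Suc i) + 1)"
    by (simp add: fls_X_inv_times_conv_shift moment_series_def add_ac)
  also have "\<dots> = momL \<mu> (monom 1 i * pCons a q)"
    by (simp only: pCons.IH monom_pCons momL_add momL_monom)
  finally show ?case .
qed simp

lemma fls_nth_epsn:
  "fls_nth (epsn \<mu> q) j = (if j \<le> 0 then 0 else momL \<mu> (monom 1 (nat (j - 1)) * q))"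
proof -
  have coeff_zpolypart: "coeff (zpolypart G) k = fls_nth G (- int k)" for G k
    unfolding zpolypart_def coeff_sum by (simp add: coeff_monom sum.delta' cong: if_cong)
  show ?thesis
    using fls_nth_moment_series_mult[of \<mu> q "nat (j - 1)"]
    by (simp add: epsn_def fls_nth_zpoly coeff_zpolypart split: if_splits)
qed

section \<open>The Pearson equation and partial fractions\<close>

text \<open>With \<epsilon> = f P - Q and \<epsilon>' = f' P + f P' - Q', these identities are the cancellation of f
  from \<Theta> and \<Omega> by the Pearson equation w f' = 2vf + u.\<close>

lemma pearson_eliminates_theta:
  fixes w v u f f' P P' Q Q' :: "'a::comm_ring_1"
  assumes "w * f' = 2 * v * f + u"
  shows "w * ((f * P - Q) * P' - (f' * P + f * P' - Q') * P) + 2 * v * (f * P - Q) * P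
       = w * (Q' * P - P' * Q) - 2 * v * Q * P - u * P ^ 2"
proof -
  from assms have u: "u = w * f' - 2 * v * f"
    by (simp add: algebra_simps)
  show ?thesis
    unfolding u by (simp add: algebra_simps power2_eq_square)
qed

lemma pearson_eliminates_omega:
  fixes w v u f f' P\<^sub>1 P\<^sub>2 P\<^sub>1' Q\<^sub>1 Q\<^sub>2 Q\<^sub>1' :: "'a::comm_ring_1"
  assumes "w * f' = 2 * v * f + u"
  shows "w * ((f * P\<^sub>2 - Q\<^sub>2) * P\<^sub>1' - (f' * P\<^sub>1 + f * P\<^sub>1' - Q\<^sub>1') * P\<^sub>2)
           + v * ((f * P\<^sub>2 - Q\<^sub>2) * P\<^sub>1 + (f * P\<^sub>1 - Q\<^sub>1) * P\<^sub>2)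
       = w * (Q\<^sub>1' * P\<^sub>2 - Q\<^sub>2 * P\<^sub>1') - u * P\<^sub>1 * P\<^sub>2 - v * (Q\<^sub>2 * P\<^sub>1 + Q\<^sub>1 * P\<^sub>2)"
proof -
  from assms have u: "u = w * f' - 2 * v * f"
    by (simp add: algebra_simps)
  show ?thesis
    unfolding u by (simp add: algebra_simps)
qed

lemma pearson_theta_polynomial:
  fixes \<mu> :: "nat \<Rightarrow> complex" and W V U q :: "complex poly"
  assumes pearson: "zpoly W * zderiv (moment_series \<mu>) = 2 * zpoly V * moment_series \<mu> + zpoly U"
  defines "Q \<equiv> zpolypart (moment_series \<mu> * zpoly q)"
  shows "zpoly W * (epsn \<mu> q * zpoly (pderiv q) - zderiv (epsn \<mu> q) * zpoly q)
           + 2 * zpoly V * epsn \<mu> q * zpoly q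
         = zpoly (W * (pderiv Q * q - pderiv q * Q) - 2 * V * Q * q - U * q^2)"
  using pearson_eliminates_theta[OF pearson, where P = "zpoly q" and Q = "zpoly Q"
      and P' = "zpoly (pderiv q)" and Q' = "zpoly (pderiv Q)"]
  by (simp add: Q_def epsn_def zderiv_zpoly)

lemma pearson_omega_polynomial:
  fixes \<mu> :: "nat \<Rightarrow> complex" and W V U q r :: "complex poly"
  assumes pearson: "zpoly W * zderiv (moment_series \<mu>) = 2 * zpoly V * moment_series \<mu> + zpoly U"
  defines "Q\<^sub>q \<equiv> zpolypart (moment_series \<mu> * zpoly q)"
    and "Q\<^sub>r \<equiv> zpolypart (moment_series \<mu> * zpoly r)"
  shows "zpoly W * (epsn \<mu> r * zpoly (pderiv q) - zderiv (epsn \<mu> q) * zpoly r)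
           + zpoly V * (epsn \<mu> r * zpoly q + epsn \<mu> q * zpoly r)
         = zpoly (W * (pderiv Q\<^sub>q * r - Q\<^sub>r * pderiv q) - U * q * r - V * (Q\<^sub>r * q + Q\<^sub>q * r))"
  using pearson_eliminates_omega[OF pearson, where P\<^sub>1 = "zpoly q" and P\<^sub>2 = "zpoly r"
      and P\<^sub>1' = "zpoly (pderiv q)" and Q\<^sub>1 = "zpoly Q\<^sub>q" and Q\<^sub>2 = "zpoly Q\<^sub>r"
      and Q\<^sub>1' = "zpoly (pderiv Q\<^sub>q)"]
  by (simp add: Q\<^sub>q_def Q\<^sub>r_def epsn_def zderiv_zpoly)

lemma monic_linear_factors:
  fixes x :: "nat \<Rightarrow> complex"
  assumes "finite A"
  shows "degree (\<Prod>j\<in>A. [:- x j, 1:]) = card A" and "coeff (\<Prod>j\<in>A. [:- x j, 1:]) (card A) = 1"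
proof -
  show "degree (\<Prod>j\<in>A. [:- x j, 1:]) = card A"
    by (subst degree_prod_sum_eq) auto
  moreover have "lead_coeff (\<Prod>j\<in>A. [:- x j, 1:]) = 1"
    by (simp add: lead_coeff_prod)
  ultimately show "coeff (\<Prod>j\<in>A. [:- x j, 1:]) (card A) = 1"
    by simp
qed

text \<open>S is the numerator of \<Sum> \<alpha>_k/(z - x_k) over the common denominator \<Prod> (z - x_k).\<close>

lemma partial_fractions_numerator:
  fixes x \<alpha> :: "nat \<Rightarrow> complex"
  assumes "finite A" "A \<noteq> {}"
  defines "S \<equiv> \<Sum>k\<in>A. Polynomial.smult (\<alpha> k) (\<Prod>j\<in>A - {k}. [:- x j, 1:])"
  shows "degree S < card A" and "coeff S (card A - 1) = (\<Sum>k\<in>A. \<alpha> k)"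
proof -
  have card: "card (A - {k}) = card A - 1" if "k \<in> A" for k
    using that assms(1) by simp
  have "degree (Polynomial.smult (\<alpha> k) (\<Prod>j\<in>A - {k}. [:- x j, 1:])) \<le> card A - 1" if "k \<in> A" for k
    using degree_smult_le[of "\<alpha> k" "\<Prod>j\<in>A - {k}. [:- x j, 1:]"]
      monic_linear_factors(1)[of "A - {k}" x] assms(1) card[OF that]
    by simp
  then have "degree S \<le> card A - 1"
    unfolding S_def using assms(1) by (intro degree_sum_le)
  moreover have "card A > 0"
    using assms(1,2) by (simp add: card_gt_0_iff)
  ultimately show "degree S < card A"
    by linarith
  have "coeff (\<Prod>j\<in>A - {k}. [:- x j, 1:]) (card A - 1) = 1" if "k \<in> A" for k
    using monic_linear_factors(2)[of "A - {k}" x] assms(1) card[OF that] by simp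
  then show "coeff S (card A - 1) = (\<Sum>k\<in>A. \<alpha> k)"
    unfolding S_def coeff_sum by (intro sum.cong) simp_all
qed

section \<open>Orthonormal and semi-classical polynomials\<close>

locale orthonormal_polys =
  fixes \<mu> :: "nat \<Rightarrow> complex" and p :: "nat \<Rightarrow> complex poly"
  assumes degree_p: "degree (p k) = k"
    and orthonormal: "momL \<mu> (p k * p l) = (if k = l then 1 else 0)"
begin

lemma lead_coeff_p_nonzero: "lead_coeff (p k) \<noteq> 0"
  using orthonormal[of k k] by auto

lemma momL_orthogonal: "degree q < k \<Longrightarrow> momL \<mu> (q * p k) = 0"
proof (induction "degree q" arbitrary: q rule: less_induct)
  case less
  define d where "d = degree q"
  define c where "c = lead_coeff q / lead_coeff (p d)"
  define q' where "q' = q - Polynomial.smult c (p d)"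
  have "q' = 0 \<or> degree q' < degree q"
  proof (cases "q' = 0")
    case False
    have "degree q' \<le> d"
      unfolding q'_def by (metis d_def degree_diff_le degree_smult_le degree_p order_refl)
    moreover have "coeff q' d = 0"
      using lead_coeff_p_nonzero[of d] by (simp add: q'_def c_def d_def degree_p)
    ultimately show ?thesis
      using False by (simp add: d_def degree_less_if_less_eqI)
  qed simp
  then have "momL \<mu> (q' * p k) = 0"
    using less by auto
  moreover have "momL \<mu> (p d * p k) = 0"
    using orthonormal[of d k] less.prems by (simp add: d_def)
  moreover have "q = q' + Polynomial.smult c (p d)"
    by (simp add: q'_def)
  ultimately show ?case
    by (metis distrib_right momL_add momL_smult mult_smult_left mult_zero_right add_0)
qed

lemma momL_monom_mult_p: "momL \<mu> (monom 1 k * p k) = 1 / lead_coeff (p k)"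
proof -
  define r where "r = p k - monom (lead_coeff (p k)) k"
  have "r = 0 \<or> degree r < k"
    using degree_less_if_less_eqI[of r "p k"] degree_diff_le[of "p k" k "monom _ k"]
    by (auto simp: r_def degree_p degree_monom_le)
  then have "momL \<mu> (r * p k) = 0"
    using momL_orthogonal by auto
  moreover have "p k = Polynomial.smult (lead_coeff (p k)) (monom 1 k) + r"
    by (simp add: r_def smult_monom)
  then have "momL \<mu> (p k * p k) = lead_coeff (p k) * momL \<mu> (monom 1 k * p k) + momL \<mu> (r * p k)"
    by (metis distrib_right momL_add momL_smult mult_smult_left)
  ultimately show ?thesis
    using orthonormal[of k k] lead_coeff_p_nonzero[of k] by (simp add: field_simps)
qed

lemma vanishes_below_epsn: "vanishes_below (epsn \<mu> (p k)) (int k + 1)"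
  by (auto simp: vanishes_below_def fls_nth_epsn degree_monom_eq intro!: momL_orthogonal)

lemma fls_nth_epsn_p: "fls_nth (epsn \<mu> (p k)) (int k + 1) = 1 / lead_coeff (p k)"
  by (simp add: fls_nth_epsn momL_monom_mult_p)

lemma vanishes_below_zderiv_epsn: "vanishes_below (zderiv (epsn \<mu> (p k))) (int k + 2)"
  using vanishes_below_zderiv[OF vanishes_below_epsn] by (simp add: add.assoc)

lemma fls_nth_zderiv_epsn:
  "fls_nth (zderiv (epsn \<mu> (p k))) (int k + 2) = - (of_nat k + 1) / lead_coeff (p k)"
proof -
  have "fls_nth (zderiv (epsn \<mu> (p k))) (int k + 1 + 1)
      = - (of_int (int k + 1) * fls_nth (epsn \<mu> (p k)) (int k + 1))"
    by (simp only: fls_nth_zderiv add_diff_cancel_right')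
  also have "\<dots> = - (of_nat k + 1) / lead_coeff (p k)"
    by (simp only: fls_nth_epsn_p) (simp add: minus_divide_left)
  finally show ?thesis
    by (simp add: add.assoc)
qed

lemma fls_nth_zpoly_p: "fls_nth (zpoly (p k)) (- int k) = lead_coeff (p k)"
  by (simp add: degree_p)

lemma vanishes_below_zpoly_p: "vanishes_below (zpoly (p k)) (- int k)"
  using lead_coeff_p_nonzero[of k] by (intro vanishes_below_zpoly) (auto simp: deg'_def degree_p)

lemma vanishes_below_zpoly_pderiv_p: "vanishes_below (zpoly (pderiv (p k))) (1 - int k)"
  using vanishes_below_zderiv[OF vanishes_below_zpoly_p] by (simp add: zderiv_zpoly)

lemma fls_nth_zpoly_pderiv_p: "fls_nth (zpoly (pderiv (p k))) (1 - int k) = of_nat k * lead_coeff (p k)"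
  using fls_nth_zderiv[of "zpoly (p k)" "1 - int k"] by (simp add: zderiv_zpoly degree_p)

lemma theta_wronskian_leading:
  fixes k :: nat
  defines "A \<equiv> epsn \<mu> (p k) * zpoly (pderiv (p k)) - zderiv (epsn \<mu> (p k)) * zpoly (p k)"
  shows "vanishes_below A 2" and "fls_nth A 2 = of_nat (2 * k + 1)"
proof -
  note E = vanishes_below_epsn[of k] and E' = vanishes_below_zderiv_epsn[of k]
    and P = vanishes_below_zpoly_p[of k] and P' = vanishes_below_zpoly_pderiv_p[of k]
  have idx: "int k + 1 + (1 - int k) = 2" "int k + 2 + - int k = 2"
    by simp_all
  show "vanishes_below A 2"
    unfolding A_def
    by (intro vanishes_below_diff vanishes_below_mult[OF E P' idx(1)] vanishes_below_mult[OF E' P idx(2)])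
  have "fls_nth A 2 = fls_nth (epsn \<mu> (p k)) (int k + 1) * fls_nth (zpoly (pderiv (p k))) (1 - int k)
      - fls_nth (zderiv (epsn \<mu> (p k))) (int k + 2) * fls_nth (zpoly (p k)) (- int k)"
    unfolding A_def fls_minus_nth
    by (simp only: fls_nth_mult_vanishes_below[OF E P' idx(1)] fls_nth_mult_vanishes_below[OF E' P idx(2)])
  then show "fls_nth A 2 = of_nat (2 * k + 1)"
    using lead_coeff_p_nonzero[of k]
    by (simp only: fls_nth_epsn_p fls_nth_zpoly_pderiv_p fls_nth_zderiv_epsn fls_nth_zpoly_p)
      (simp add: field_simps)
qed

lemma epsn_mult_p_leading:
  shows "vanishes_below (epsn \<mu> (p k) * zpoly (p k)) 1"
    and "fls_nth (epsn \<mu> (p k) * zpoly (p k)) 1 = 1"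
proof -
  have idx: "int k + 1 + - int k = 1"
    by simp
  show "vanishes_below (epsn \<mu> (p k) * zpoly (p k)) 1"
    by (rule vanishes_below_mult[OF vanishes_below_epsn vanishes_below_zpoly_p idx])
  show "fls_nth (epsn \<mu> (p k) * zpoly (p k)) 1 = 1"
    using lead_coeff_p_nonzero[of k]
    by (simp only: fls_nth_mult_vanishes_below[OF vanishes_below_epsn vanishes_below_zpoly_p idx]
        fls_nth_epsn_p fls_nth_zpoly_p) simp
qed

lemma omega_wronskian_leading:
  fixes k :: nat
  defines "c \<equiv> lead_coeff (p k) / lead_coeff (p (Suc k))"
  defines "C \<equiv> fls_const c * (epsn \<mu> (p k) * zpoly (pderiv (p (Suc k)))
                             - zderiv (epsn \<mu> (p (Suc k))) * zpoly (p k))"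
  shows "vanishes_below C 1" and "fls_nth C 1 = of_nat (Suc k)"
proof -
  note E = vanishes_below_epsn[of k] and E' = vanishes_below_zderiv_epsn[of "Suc k"]
    and P = vanishes_below_zpoly_p[of k] and P' = vanishes_below_zpoly_pderiv_p[of "Suc k"]
  have idx: "int k + 1 + (1 - int (Suc k)) = 1" "int (Suc k) + 2 + - int k = 3" "0 + 1 = (1::int)"
    by simp_all
  have low: "vanishes_below (zderiv (epsn \<mu> (p (Suc k))) * zpoly (p k)) 3"
    by (rule vanishes_below_mult[OF E' P idx(2)])
  have "vanishes_below (epsn \<mu> (p k) * zpoly (pderiv (p (Suc k)))
                         - zderiv (epsn \<mu> (p (Suc k))) * zpoly (p k)) 1"
    by (intro vanishes_below_diff vanishes_below_mult[OF E P' idx(1)] vanishes_below_mono[OF low]) simp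
  then show "vanishes_below C 1"
    unfolding C_def by (rule vanishes_below_mult[OF vanishes_below_const _ idx(3)])
  have "fls_nth C 1 = c * (fls_nth (epsn \<mu> (p k)) (int k + 1)
      * fls_nth (zpoly (pderiv (p (Suc k)))) (1 - int (Suc k)))"
    using vanishes_belowD[OF low, of 1]
    by (simp only: C_def fls_mult_const_nth fls_minus_nth fls_nth_mult_vanishes_below[OF E P' idx(1)])
      simp
  then show "fls_nth C 1 = of_nat (Suc k)"
    using lead_coeff_p_nonzero[of k] lead_coeff_p_nonzero[of "Suc k"]
    by (simp only: fls_nth_epsn_p fls_nth_zpoly_pderiv_p) (simp add: c_def)
qed

lemma omega_sum_leading:
  fixes k :: nat
  defines "c \<equiv> lead_coeff (p k) / lead_coeff (p (Suc k))"
  defines "D \<equiv> fls_const c * (epsn \<mu> (p k) * zpoly (p (Suc k)) + epsn \<mu> (p (Suc k)) * zpoly (p k))"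
  shows "vanishes_below D 0" and "fls_nth D 0 = 1"
proof -
  note E = vanishes_below_epsn[of k] and E\<^sub>1 = vanishes_below_epsn[of "Suc k"]
    and P = vanishes_below_zpoly_p[of k] and P\<^sub>1 = vanishes_below_zpoly_p[of "Suc k"]
  have idx: "int k + 1 + - int (Suc k) = 0" "int (Suc k) + 1 + - int k = 2" "0 + 0 = (0::int)"
    by simp_all
  have low: "vanishes_below (epsn \<mu> (p (Suc k)) * zpoly (p k)) 2"
    by (rule vanishes_below_mult[OF E\<^sub>1 P idx(2)])
  have "vanishes_below (epsn \<mu> (p k) * zpoly (p (Suc k)) + epsn \<mu> (p (Suc k)) * zpoly (p k)) 0"
    by (intro vanishes_below_add vanishes_below_mult[OF E P\<^sub>1 idx(1)] vanishes_below_mono[OF low]) simp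
  then show "vanishes_below D 0"
    unfolding D_def by (rule vanishes_below_mult[OF vanishes_below_const _ idx(3)])
  have "fls_nth D 0 = c * (fls_nth (epsn \<mu> (p k)) (int k + 1) * fls_nth (zpoly (p (Suc k))) (- int (Suc k)))"
    using vanishes_belowD[OF low, of 0]
    by (simp only: D_def fls_mult_const_nth fls_plus_nth fls_nth_mult_vanishes_below[OF E P\<^sub>1 idx(1)])
      simp
  then show "fls_nth D 0 = 1"
    using lead_coeff_p_nonzero[of k] lead_coeff_p_nonzero[of "Suc k"]
    by (simp only: fls_nth_epsn_p fls_nth_zpoly_p) (simp add: c_def)
qed

end

locale semiclassical = orthonormal_polys \<mu> p for \<mu> p +
  fixes W V U :: "complex poly"
  assumes pearson: "zpoly W * zderiv (moment_series \<mu>) = 2 * zpoly V * moment_series \<mu> + zpoly U"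
begin

definition theta :: "nat \<Rightarrow> complex fls" where
  "theta k = zpoly W * (epsn \<mu> (p k) * zpoly (pderiv (p k)) - zderiv (epsn \<mu> (p k)) * zpoly (p k))
               + 2 * zpoly V * epsn \<mu> (p k) * zpoly (p k)"

definition omega :: "nat \<Rightarrow> complex fls" where
  "omega k = fls_const (lead_coeff (p (k - 1)) / lead_coeff (p k)) * zpoly W
                 * (epsn \<mu> (p (k - 1)) * zpoly (pderiv (p k)) - zderiv (epsn \<mu> (p k)) * zpoly (p (k - 1)))
             + fls_const (lead_coeff (p (k - 1)) / lead_coeff (p k)) * zpoly V
                 * (epsn \<mu> (p (k - 1)) * zpoly (p k) + epsn \<mu> (p k) * zpoly (p (k - 1)))"

lemma theta_eq_zpoly:
  fixes k :: nat
  defines "Q \<equiv> zpolypart (moment_series \<mu> * zpoly (p k))"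
  shows "theta k = zpoly (W * (pderiv Q * p k - pderiv (p k) * Q) - 2 * V * Q * p k - U * (p k)\<^sup>2)"
  unfolding theta_def Q_def by (rule pearson_theta_polynomial[OF pearson])

lemma omega_polynomial: "\<exists>R. omega k = zpoly R"
proof -
  have "omega k = fls_const (lead_coeff (p (k - 1)) / lead_coeff (p k))
      * (zpoly W * (epsn \<mu> (p (k - 1)) * zpoly (pderiv (p k)) - zderiv (epsn \<mu> (p k)) * zpoly (p (k - 1)))
         + zpoly V * (epsn \<mu> (p (k - 1)) * zpoly (p k) + epsn \<mu> (p k) * zpoly (p (k - 1))))"
    unfolding omega_def by (simp only: distrib_left mult.assoc)
  then show ?thesis
    using pearson_omega_polynomial[OF pearson, where q = "p k" and r = "p (k - 1)"]
    by (metis zpoly_smult)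
qed

lemma theta_decomposition:
  obtains A B where "theta k = zpoly W * A + zpoly (Polynomial.smult 2 V) * B"
    and "vanishes_below A 2" "fls_nth A 2 = of_nat (2 * k + 1)"
    and "vanishes_below B 1" "fls_nth B 1 = 1"
  using that[of "epsn \<mu> (p k) * zpoly (pderiv (p k)) - zderiv (epsn \<mu> (p k)) * zpoly (p k)"
      "epsn \<mu> (p k) * zpoly (p k)"] theta_wronskian_leading[of k] epsn_mult_p_leading[of k]
  by (simp add: theta_def mult.assoc)

lemma omega_decomposition:
  obtains C D where "omega (Suc k) = zpoly W * C + zpoly V * D"
    and "vanishes_below C 1" "fls_nth C 1 = of_nat (Suc k)"
    and "vanishes_below D 0" "fls_nth D 0 = 1"
proof -
  let ?c = "fls_const (lead_coeff (p k) / lead_coeff (p (Suc k)))"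
  show thesis
    using that[of "?c * (epsn \<mu> (p k) * zpoly (pderiv (p (Suc k))) - zderiv (epsn \<mu> (p (Suc k))) * zpoly (p k))"
        "?c * (epsn \<mu> (p k) * zpoly (p (Suc k)) + epsn \<mu> (p (Suc k)) * zpoly (p k))"]
      omega_wronskian_leading[of k] omega_sum_leading[of k]
    by (simp add: omega_def ac_simps)
qed

lemma poly_deg_le_theta: "poly_deg_le (theta k) (max (deg' W - 2) (deg' V - 1))"
proof -
  obtain A B where "theta k = zpoly W * A + zpoly (Polynomial.smult 2 V) * B"
    and "vanishes_below A (1 + 1)" "vanishes_below B 1"
    by (rule theta_decomposition) simp
  then show ?thesis
    using theta_eq_zpoly poly_deg_le_zpoly_combination by (fastforce simp: deg'_smult)
qed

lemma poly_deg_le_omega: "poly_deg_le (omega (Suc k)) (max (deg' W - 1) (deg' V))"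
proof -
  obtain C D where "omega (Suc k) = zpoly W * C + zpoly V * D"
    and "vanishes_below C (0 + 1)" "vanishes_below D 0"
    by (rule omega_decomposition) simp
  then show ?thesis
    using omega_polynomial poly_deg_le_zpoly_combination by fastforce
qed

lemma theta_leading_coeff:
  assumes "degree W \<le> m" "degree V < m"
  shows "fls_nth (theta k) (2 - int m) = coeff W m * of_nat (2 * k + 1) + 2 * coeff V (m - 1)"
    and "\<forall>j::nat. int j > int m - 2 \<longrightarrow> fls_nth (theta k) (- int j) = 0"
proof -
  obtain A B where theta: "theta k = zpoly W * A + zpoly (Polynomial.smult 2 V) * B"
    and A: "vanishes_below A (1 + 1)" "fls_nth A 2 = of_nat (2 * k + 1)"
    and B: "vanishes_below B 1" "fls_nth B 1 = 1"
    by (rule theta_decomposition) simp_all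
  have "degree (Polynomial.smult 2 V) < m"
    using assms(2) by simp
  note leading = zpoly_combination_leading_coeff[OF assms(1) this A(1) B(1), folded theta]
  from leading(1) show "fls_nth (theta k) (2 - int m) = coeff W m * of_nat (2 * k + 1) + 2 * coeff V (m - 1)"
    using A(2) B(2) by simp
  from leading(2) show "\<forall>j::nat. int j > int m - 2 \<longrightarrow> fls_nth (theta k) (- int j) = 0"
    by simp
qed

lemma omega_leading_coeff:
  assumes "degree W \<le> m" "degree V < m"
  shows "fls_nth (omega (Suc k)) (1 - int m) = coeff W m * of_nat (Suc k) + coeff V (m - 1)"
    and "\<forall>j::nat. int j > int m - 1 \<longrightarrow> fls_nth (omega (Suc k)) (- int j) = 0"
proof -
  obtain C D where omega: "omega (Suc k) = zpoly W * C + zpoly V * D"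
    and C: "vanishes_below C (0 + 1)" "fls_nth C 1 = of_nat (Suc k)"
    and D: "vanishes_below D 0" "fls_nth D 0 = 1"
    by (rule omega_decomposition) simp_all
  note leading = zpoly_combination_leading_coeff[OF assms C(1) D(1), folded omega]
  from leading(1) show "fls_nth (omega (Suc k)) (1 - int m) = coeff W m * of_nat (Suc k) + coeff V (m - 1)"
    using C(2) D(2) by simp
  from leading(2) show "\<forall>j::nat. int j > int m - 1 \<longrightarrow> fls_nth (omega (Suc k)) (- int j) = 0"
    by simp
qed

lemma residue_form_leading_coeffs:
  fixes x \<alpha> :: "nat \<Rightarrow> complex"
  assumes m: "m \<ge> 2" and W: "W = (\<Prod>k<m. [:- x k, 1:])"
    and V: "Polynomial.smult 2 V = (\<Sum>k<m. Polynomial.smult (\<alpha> k) (\<Prod>j\<in>{..<m} - {k}. [:- x j, 1:]))"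
  shows "fls_nth (theta n) (2 - int m) = of_nat (2 * n + 1) + (\<Sum>k<m. \<alpha> k)"
    and "\<And>j. j > m - 2 \<Longrightarrow> fls_nth (theta n) (- int j) = 0"
    and "fls_nth (omega (Suc n)) (1 - int m) = of_nat (Suc n) + (\<Sum>k<m. \<alpha> k) / 2"
    and "\<And>j. j > m - 1 \<Longrightarrow> fls_nth (omega (Suc n)) (- int j) = 0"
proof -
  have W_top: "degree W \<le> m" "coeff W m = 1"
    using monic_linear_factors[of "{..<m}" x] W by simp_all
  have V_top: "degree V < m" "2 * coeff V (m - 1) = (\<Sum>k<m. \<alpha> k)"
    using partial_fractions_numerator[of "{..<m}" \<alpha> x] m by (auto simp: V[symmetric] lessThan_empty_iff)
  note theta = theta_leading_coeff[OF W_top(1) V_top(1), of n]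
    and omega = omega_leading_coeff[OF W_top(1) V_top(1), of n]
  show "fls_nth (theta n) (2 - int m) = of_nat (2 * n + 1) + (\<Sum>k<m. \<alpha> k)"
    using theta(1) W_top(2) V_top(2) by simp
  show "fls_nth (omega (Suc n)) (1 - int m) = of_nat (Suc n) + (\<Sum>k<m. \<alpha> k) / 2"
    using omega(1) W_top(2) V_top(2) by (simp add: field_simps)
  show "fls_nth (theta n) (- int j) = 0" if "j > m - 2" for j
    using theta(2) m that by auto
  show "fls_nth (omega (Suc n)) (- int j) = 0" if "j > m - 1" for j
    using omega(2) m that by auto
qed

end

theorem mainTheorem1:
  fixes \<mu> :: "nat \<Rightarrow> complex" and p :: "nat \<Rightarrow> complex poly"
    and W V U :: "complex poly" and n :: nat
  assumes hankel_nz: "\<And>k. det (hankel \<mu> k) \<noteq> 0"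
    and p_deg: "\<And>k. degree (p k) = k"
    and p_orth: "\<And>k l. momL \<mu> (p k * p l) = (if k = l then 1 else 0)"
    and W_nz: "W \<noteq> 0"
    and pearson: "zpoly W * zderiv (moment_series \<mu>)
                    = 2 * zpoly V * moment_series \<mu> + zpoly U"
    and n_pos: "n \<ge> 1"
  defines "a \<equiv> \<lambda>k. lead_coeff (p (k - 1)) / lead_coeff (p k)"
    and "\<epsilon> \<equiv> \<lambda>k. epsn \<mu> (p k)"
    and "P \<equiv> \<lambda>k. zpoly (p k)"
    and "Q \<equiv> \<lambda>k. zpolypart (moment_series \<mu> * zpoly (p k))"
  defines "\<Theta> \<equiv> zpoly W * (\<epsilon> n * zpoly (pderiv (p n)) - zderiv (\<epsilon> n) * P n)
                 + 2 * zpoly V * \<epsilon> n * P n"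
    and "\<Omega> \<equiv> fls_const (a n) * zpoly W * (\<epsilon> (n-1) * zpoly (pderiv (p n)) - zderiv (\<epsilon> n) * P (n-1))
                 + fls_const (a n) * zpoly V * (\<epsilon> (n-1) * P n + \<epsilon> n * P (n-1))"
  shows "poly_deg_le \<Theta> (max (deg' W - 2) (deg' V - 1))
    \<and> poly_deg_le \<Omega> (max (deg' W - 1) (deg' V))
    \<and> \<Theta> = zpoly (W * (pderiv (Q n) * p n - pderiv (p n) * Q n)
                     - 2 * V * Q n * p n - U * (p n)^2)
    \<and> (\<forall>(m::nat) (x::nat \<Rightarrow> complex) (\<alpha>::nat \<Rightarrow> complex).
           m \<ge> 2 \<longrightarrow> W = (\<Prod>k<m. [:- x k, 1:]) \<longrightarrow>
           Polynomial.smult 2 V = (\<Sum>k<m. Polynomial.smult (\<alpha> k) (\<Prod>j\<in>{..<m} - {k}. [:- x j, 1:])) \<longrightarrow>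
           fls_nth \<Theta> (2 - int m) = of_nat (2*n+1) + (\<Sum>k<m. \<alpha> k)
           \<and> (\<forall>k::nat. k > m - 2 \<longrightarrow> fls_nth \<Theta> (- int k) = 0)
           \<and> fls_nth \<Omega> (1 - int m) = of_nat n + (\<Sum>k<m. \<alpha> k) / 2
           \<and> (\<forall>k::nat. k > m - 1 \<longrightarrow> fls_nth \<Omega> (- int k) = 0))"
proof -
  interpret semiclassical \<mu> p W V U
    using p_deg p_orth pearson by unfold_locales
  obtain k where n: "n = Suc k"
    using n_pos not0_implies_Suc by fastforce
  have \<Theta>_eq: "\<Theta> = theta n"
    by (simp add: \<Theta>_def theta_def \<epsilon>_def P_def)
  have \<Omega>_eq: "\<Omega> = omega (Suc k)"
    by (simp add: \<Omega>_def omega_def \<epsilon>_def P_def a_def n)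
  show ?thesis
    unfolding \<Theta>_eq \<Omega>_eq Q_def n
    by (intro conjI allI impI poly_deg_le_theta poly_deg_le_omega theta_eq_zpoly;
        (rule residue_form_leading_coeffs; assumption)?)
qed

end
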